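(* Let $\mathsf{A}$ be a function from the pairs $i<j$ of a finite linear order $\{0,\dots,n-1\}$ into the nonnegative integers satisfying condition (!). If $i<j<k<n$ and $\mathsf{A}(j,k)=0$, then $\mathsf{A}(i,k)=0$.
   Context: For integers $p,q,r$ write $r=p\,!\,q$ if $r\ge\min(p-1,q)$, with equality holding unless $p=q$. A function $\mathsf{A}$ on pairs $a<b$ of a finite linear order into the nonnegative integers satisfies (!) if $\mathsf{A}(a,b)=\mathsf{A}(b,c)\,!\,\mathsf{A}(a,c)$ whenever $a<b<c$. *)

theory Defs
  imports Main
begin

text \<open>r = p ! q  iff  r \<ge> min (p - 1) q, with equality unless p = q (integers).\<close>
definition bang_rel :: "int \<Rightarrow> int \<Rightarrow> int \<Rightarrow> bool" where
  "bang_rel r p q \<longleftrightarrow> r \<ge> min (p - 1) q \<and> (p \<noteq> q \<longrightarrow> r = min (p - 1) q)"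

text \<open>Condition (!) for A on pairs a < b of {0..<n}: A(a,b) = A(b,c) ! A(a,c) for a<b<c<n.\<close>
definition cond_bang :: "nat \<Rightarrow> (nat \<Rightarrow> nat \<Rightarrow> nat) \<Rightarrow> bool" where
  "cond_bang n A \<longleftrightarrow> (\<forall>a b c. a < b \<and> b < c \<and> c < n \<longrightarrow>
      bang_rel (int (A a b)) (int (A b c)) (int (A a c)))"

end

theory Submission
  imports Defs
begin

text \<open>If \<open>p = 0 \<noteq> q\<close> then \<open>r = min (-1) q \<le> -1\<close>, which a nonnegative \<open>r\<close> cannot be.\<close>
lemma bang_rel_zero_left:
  assumes "bang_rel r 0 q" and "r \<ge> 0" and "q \<ge> 0"
  shows "q = 0"
  using assms unfolding bang_rel_def by auto

theorem lemma5p6: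
  fixes n :: nat and A :: "nat \<Rightarrow> nat \<Rightarrow> nat" and i j k :: nat
  assumes "cond_bang n A"
    and "i < j" and "j < k" and "k < n"
    and "A j k = 0"
  shows "A i k = 0"
proof -
  have "bang_rel (int (A i j)) (int (A j k)) (int (A i k))"
    using assms(1-4) unfolding cond_bang_def by blast
  then have "bang_rel (int (A i j)) 0 (int (A i k))"
    using assms(5) by simp
  then show ?thesis
    using bang_rel_zero_left by fastforce
qed

end
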